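(* Let $q$ be a set of operations on a set $\Omega$ and write $\sim$ for $\sim_q$. (1) A relation $R\subseteq\Omega^k$ is definable in $\mathscr L^-_{\infty\infty}(q)$ with parameters from $\Omega$ if and only if $R$ is invariant under $\sim$. (2) For every quantifier $Q$ on $\Omega$, $Q^{\upharpoonright q}=\cup(Q/\!\sim)$.
   Context: A set of operations on $\Omega$ is a set of finitary relations and quantifiers (subsets of $\mathcal P(\Omega^{k_1})\times\cdots\times\mathcal P(\Omega^{k_l})$) on $\Omega$; $\mathscr L^-_{\infty\infty}(q)$ is the corresponding equality-free infinitary logic with Lindström quantifiers. $a\sim_q b$ iff for every formula $\phi(x,\bar y)$ of $\mathscr L^-_{\infty\infty}(q)$ and every tuple $\bar c$ from $\Omega$, $\phi(a,\bar c)\iff\phi(b,\bar c)$ in $(\Omega,q)$. $R$ is invariant under $\sim$ if $\bar a\sim\bar b$ (coordinatewise) implies ($\bar a\in R\iff\bar b\in R$). $Q^{\upharpoonright q}$ is the set of tuples $(R_1,\dots,R_l)\in Q$ with each $R_i$ definable in $\mathscr L^-_{\infty\infty}(q)$ with parameters from $\Omega$. For an equivalence relation $\sim$ with classes $[a]$: for $R'\subseteq(\Omega/\!\sim)^k$, $\cup R'=\{(a_1,\dots,a_k)\in\Omega^k: ([a_1],\dots,[a_k])\in R'\}$; for a quantifier $Q$ on $\Omega$, $Q/\!\sim=\{(R'_1,\dots,R'_l): (\cup R'_1,\dots,\cup R'_l)\in Q\}$ (a quantifier on $\Omega/\!\sim$); for a quantifier $Q'$ on $\Omega/\!\sim$,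 $\cup Q'=\{(\cup R'_1,\dots,\cup R'_l): (R'_1,\dots,R'_l)\in Q'\}$. *)

theory Defs
  imports Main
begin

text \<open>
  The universe Omega is the whole type 'a.  Tuples in Omega^k are lists of length k.
  An operation is either a k-ary relation or a quantifier of type (k_1,...,k_l),
  i.e. a set of l-tuples (lists) of relations R_i with R_i a subset of Omega^(k_i).
\<close>

datatype 'a oper = Rel nat "'a list set" | Quant "nat list" "'a list set list set"

definition is_quant :: "nat list \<Rightarrow> 'b list set list set \<Rightarrow> bool" where
  "is_quant ks Q \<longleftrightarrow> (\<forall>Rs\<in>Q. length Rs = length ks \<and>
      (\<forall>i<length ks. \<forall>t\<in>Rs ! i. length t = ks ! i))"

definition upd :: "('v \<Rightarrow> 'a) \<Rightarrow> 'v list \<Rightarrow> 'a list \<Rightarrow> 'v \<Rightarrow> 'a" where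
  "upd s xs as = (\<lambda>v. case map_of (zip xs as) v of Some a \<Rightarrow> a | None \<Rightarrow> s v)"

text \<open>
  Semantic presentation of the equality-free infinitary logic L^-_{infinity infinity}(q)
  with Lindstroem quantifiers, with variables of type 'v and with constants
  (parameters) for every element of Omega.  Terms are variables (Inl) or constants (Inr).
  A formula is identified with the set of assignments satisfying it; lformula q A
  says that A is the meaning of some formula.
\<close>
definition tval :: "('v \<Rightarrow> 'a) \<Rightarrow> 'v + 'a \<Rightarrow> 'a" where
  "tval s t = (case t of Inl v \<Rightarrow> s v | Inr a \<Rightarrow> a)"

inductive lformula :: "'a oper set \<Rightarrow> ('v \<Rightarrow> 'a) set \<Rightarrow> bool" for q where
  atom: "Rel k R \<in> q \<Longrightarrow> length ts = k \<Longrightarrow> lformula q {s. map (tval s) ts \<in> R}"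
| neg: "lformula q A \<Longrightarrow> lformula q (- A)"
| conj: "(\<And>A. A \<in> F \<Longrightarrow> lformula q A) \<Longrightarrow> lformula q (\<Inter> F)"
| ex: "lformula q A \<Longrightarrow>
     lformula q {s. \<exists>t. (\<forall>v. v \<notin> X \<longrightarrow> t v = s v) \<and> t \<in> A}"
| quant: "Quant ks Q \<in> q \<Longrightarrow> length xss = length ks \<Longrightarrow> length As = length ks \<Longrightarrow>
     (\<And>i. i < length ks \<Longrightarrow> distinct (xss ! i) \<and> length (xss ! i) = ks ! i) \<Longrightarrow>
     (\<And>i. i < length ks \<Longrightarrow> lformula q (As ! i)) \<Longrightarrow>
     lformula q {s. map (\<lambda>i. {as. length as = ks ! i \<and> upd s (xss ! i) as \<in> As ! i})
                        [0..<length ks] \<in> Q}"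

text \<open>a \<sim>_q b: no formula phi(x, parameters) distinguishes a from b.
  The assignment s supplies the parameters for the remaining free variables.\<close>
definition lsim :: "'v itself \<Rightarrow> 'a oper set \<Rightarrow> 'a \<Rightarrow> 'a \<Rightarrow> bool" where
  "lsim (_::'v itself) q a b \<longleftrightarrow>
     (\<forall>(A::('v \<Rightarrow> 'a) set) s x. lformula q A \<longrightarrow> (s(x := a) \<in> A \<longleftrightarrow> s(x := b) \<in> A))"

definition ldefinable :: "'v itself \<Rightarrow> 'a oper set \<Rightarrow> nat \<Rightarrow> 'a list set \<Rightarrow> bool" where
  "ldefinable (_::'v itself) q k R \<longleftrightarrow>
     (\<exists>(A::('v \<Rightarrow> 'a) set) xs s. lformula q A \<and> distinct xs \<and> length xs = k \<and>
        R = {as. length as = k \<and> upd s xs as \<in> A})"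

definition invariant :: "('a \<Rightarrow> 'a \<Rightarrow> bool) \<Rightarrow> nat \<Rightarrow> 'a list set \<Rightarrow> bool" where
  "invariant sim k R \<longleftrightarrow>
     (\<forall>as bs. length as = k \<longrightarrow> list_all2 sim as bs \<longrightarrow> (as \<in> R \<longleftrightarrow> bs \<in> R))"

definition restrict_def :: "'v itself \<Rightarrow> 'a oper set \<Rightarrow> nat list \<Rightarrow> 'a list set list set
     \<Rightarrow> 'a list set list set" where
  "restrict_def V q ks Q = {Rs \<in> Q. \<forall>i<length ks. ldefinable V q (ks ! i) (Rs ! i)}"

text \<open>Quotients: classes of an equivalence relation are represented as sets;
  Omega/sim is the set of classes.\<close>
definition cls :: "('a \<Rightarrow> 'a \<Rightarrow> bool) \<Rightarrow> 'a \<Rightarrow> 'a set" where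
  "cls sim a = {b. sim a b}"

definition quot :: "('a \<Rightarrow> 'a \<Rightarrow> bool) \<Rightarrow> 'a set set" where
  "quot sim = range (cls sim)"

definition cup_rel :: "('a \<Rightarrow> 'a \<Rightarrow> bool) \<Rightarrow> 'a set list set \<Rightarrow> 'a list set" where
  "cup_rel sim R' = {as. map (cls sim) as \<in> R'}"

definition quot_quant :: "('a \<Rightarrow> 'a \<Rightarrow> bool) \<Rightarrow> nat list \<Rightarrow> 'a list set list set
     \<Rightarrow> 'a set list set list set" where
  "quot_quant sim ks Q = {R's. length R's = length ks \<and>
      (\<forall>i<length ks. \<forall>cs\<in>R's ! i. length cs = ks ! i \<and> set cs \<subseteq> quot sim) \<and>
      map (cup_rel sim) R's \<in> Q}"

definition cup_quant :: "('a \<Rightarrow> 'a \<Rightarrow> bool) \<Rightarrow> 'a set list set list set \<Rightarrow> 'a list set list set" where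
  "cup_quant sim Q' = (\<lambda>R's. map (cup_rel sim) R's) ` Q'"

end

(*
  Definable relations are invariant: changing a tuple one coordinate at a time, each step
  is an instance of the definition of \<sim>.  Conversely, renaming variables and turning all
  but one of them into parameters makes every formula a one-variable formula; the class of
  a is the conjunction of all such formulas satisfied by a, so classes are definable, and an
  invariant k-ary relation is the disjunction, over its tuples, of the conjunctions of the
  class formulas of their entries, written in k distinct variables (there are infinitely
  many).  Part (2) is then a fact about quotients by an equivalence relation: a tuple of
  relations is the union of a tuple of relations on classes iff each relation is invariant.
*)

theory Submission
  imports Defs
begin

lemma lformula_Union:
  assumes "\<And>A. A \<in> F \<Longrightarrow> lformula q A"
  shows "lformula q (\<Union> F)"
proof -
  have "\<Union> F = - \<Inter> (uminus ` F)" by auto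
  moreover have "lformula q (- \<Inter> (uminus ` F))"
    using assms by (intro lformula.neg lformula.conj) (auto intro: lformula.neg)
  ultimately show ?thesis by (simp only:)
qed

lemma lformula_quant_pullback:
  assumes "Quant ks Q \<in> q" and "length xss = length ks"
    and "\<And>i. i < length ks \<Longrightarrow> distinct (xss ! i) \<and> length (xss ! i) = ks ! i"
    and "\<And>i. i < length ks \<Longrightarrow> lformula q (Bs i)"
    and "\<And>t i as. i < length ks \<Longrightarrow> length as = ks ! i \<Longrightarrow>
           upd (f t) (ys ! i) as \<in> As ! i \<longleftrightarrow> upd t (xss ! i) as \<in> Bs i"
  shows "lformula q {t. map (\<lambda>i. {as. length as = ks ! i \<and> upd (f t) (ys ! i) as \<in> As ! i})
                          [0..<length ks] \<in> Q}"
proof -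
  have "map (\<lambda>i. {as. length as = ks ! i \<and> upd (f t) (ys ! i) as \<in> As ! i}) [0..<length ks]
      = map (\<lambda>i. {as. length as = ks ! i \<and> upd t (xss ! i) as \<in> map Bs [0..<length ks] ! i})
          [0..<length ks]" for t
    using assms(5) by (intro map_cong) auto
  moreover have "lformula q {t. map (\<lambda>i. {as. length as = ks ! i \<and>
      upd t (xss ! i) as \<in> map Bs [0..<length ks] ! i}) [0..<length ks] \<in> Q}"
    using assms(3,4) by (intro lformula.quant[OF assms(1,2)]) auto
  ultimately show ?thesis by (simp only:)
qed

fun fix_term :: "'v set \<Rightarrow> ('v \<Rightarrow> 'a) \<Rightarrow> 'v + 'a \<Rightarrow> 'v + 'a" where
  "fix_term Y c (Inl v) = (if v \<in> Y then Inl v else Inr (c v))"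
| "fix_term Y c (Inr a) = Inr a"

lemma tval_override_on: "tval (override_on c t Y) = tval t \<circ> fix_term Y c"
proof
  show "tval (override_on c t Y) u = (tval t \<circ> fix_term Y c) u" for u
    by (cases u) (auto simp: tval_def)
qed

lemma upd_override_on:
  assumes "length as = length xs"
  shows "upd (override_on c t Y) xs as = override_on c (upd t xs as) (Y \<union> set xs)"
proof
  fix v
  show "upd (override_on c t Y) xs as v = override_on c (upd t xs as) (Y \<union> set xs) v"
  proof (cases "map_of (zip xs as) v")
    case None
    then have "v \<notin> set xs" using assms by simp
    then show ?thesis using None by (simp add: upd_def override_on_def)
  next
    case (Some a)
    then have "v \<in> set xs" by (auto dest: map_of_SomeD set_zip_leftD)
    then show ?thesis using Some by (simp add: upd_def)
  qed
qed

text \<open>Syntactically: substitute the parameter \<open>c v\<close> for every free variable \<open>v\<close> outside \<open>Y\<close>.\<close>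

lemma lformula_override_on:
  assumes "lformula q A"
  shows "lformula q {t. override_on c t Y \<in> A}"
  using assms
proof (induction arbitrary: Y rule: lformula.induct)
  case (atom k R ts)
  have "{t. override_on c t Y \<in> {s. map (tval s) ts \<in> R}}
      = {t. map (tval t) (map (fix_term Y c) ts) \<in> R}"
    by (simp add: tval_override_on)
  then show ?case using lformula.atom[OF atom(1), of "map (fix_term Y c) ts"] atom(2) by simp
next
  case (neg A)
  have "{t. override_on c t Y \<in> - A} = - {t. override_on c t Y \<in> A}" by auto
  then show ?case using lformula.neg[OF neg.IH] by simp
next
  case (conj F)
  have "{t. override_on c t Y \<in> \<Inter> F} = \<Inter> ((\<lambda>A. {t. override_on c t Y \<in> A}) ` F)" by auto
  then show ?case using conj.IH by (auto intro!: lformula.conj)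
next
  case (ex A X)
  have "{t. override_on c t Y \<in> {s. \<exists>u. (\<forall>v. v \<notin> X \<longrightarrow> u v = s v) \<and> u \<in> A}}
      = {s. \<exists>u. (\<forall>v. v \<notin> X \<longrightarrow> u v = s v) \<and> u \<in> {w. override_on c w (Y \<union> X) \<in> A}}"
  proof (intro set_eqI iffI; clarsimp)
    fix t u assume u: "\<forall>v. v \<notin> X \<longrightarrow> u v = override_on c t Y v" "u \<in> A"
    then have "override_on c (override_on t u X) (Y \<union> X) = u"
      by (auto simp: override_on_def)
    with u show "\<exists>w. (\<forall>v. v \<notin> X \<longrightarrow> w v = t v) \<and> override_on c w (Y \<union> X) \<in> A"
      by (intro exI[of _ "override_on t u X"]) auto
  next
    fix t u assume u: "\<forall>v. v \<notin> X \<longrightarrow> u v = t v" "override_on c u (Y \<union> X) \<in> A"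
    then show "\<exists>w. (\<forall>v. v \<notin> X \<longrightarrow> w v = override_on c t Y v) \<and> w \<in> A"
      by (intro exI[of _ "override_on c u (Y \<union> X)"]) (auto simp: override_on_def)
  qed
  then show ?case using lformula.ex[OF ex.IH] by simp
next
  case (quant ks Q xss As)
  show ?case unfolding mem_Collect_eq
    by (rule lformula_quant_pullback[OF quant(1,2,4), where f="\<lambda>t. override_on c t Y"
          and Bs="\<lambda>i. {u. override_on c u (Y \<union> set (xss ! i)) \<in> As ! i}"])
      (auto simp: quant.IH quant(4) upd_override_on)
qed

lemma tval_comp: "tval (t \<circ> \<pi>) = tval t \<circ> map_sum \<pi> id"
proof
  show "tval (t \<circ> \<pi>) u = (tval t \<circ> map_sum \<pi> id) u" for u
    by (cases u) (auto simp: tval_def)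
qed

lemma map_of_zip_map_inj:
  "inj \<pi> \<Longrightarrow> map_of (zip (map \<pi> xs) as) (\<pi> v) = map_of (zip xs as) v"
proof (induction xs arbitrary: as)
  case (Cons x xs)
  then show ?case by (cases as) (auto simp: inj_eq)
qed simp

lemma upd_comp: "inj \<pi> \<Longrightarrow> upd (t \<circ> \<pi>) xs as = upd t (map \<pi> xs) as \<circ> \<pi>"
  by (rule ext) (simp add: upd_def map_of_zip_map_inj split: option.split)

lemma lformula_rename:
  assumes "lformula q A" and "bij \<pi>"
  shows "lformula q {t. t \<circ> \<pi> \<in> A}"
  using assms(1)
proof (induction rule: lformula.induct)
  case (atom k R ts)
  have "{t. t \<circ> \<pi> \<in> {s. map (tval s) ts \<in> R}} = {t. map (tval t) (map (map_sum \<pi> id) ts) \<in> R}"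
    by (simp add: tval_comp)
  then show ?case using lformula.atom[OF atom(1), of "map (map_sum \<pi> id) ts"] atom(2)
    by (simp only: length_map)
next
  case (neg A)
  have "{t. t \<circ> \<pi> \<in> - A} = - {t. t \<circ> \<pi> \<in> A}" by auto
  then show ?case using lformula.neg[OF neg.IH] by (simp only:)
next
  case (conj F)
  have "{t. t \<circ> \<pi> \<in> \<Inter> F} = \<Inter> ((\<lambda>A. {t. t \<circ> \<pi> \<in> A}) ` F)" by auto
  then show ?case by (metis (no_types, lifting) conj.IH imageE lformula.conj)
next
  case (ex A X)
  have "{t. t \<circ> \<pi> \<in> {s. \<exists>u. (\<forall>v. v \<notin> X \<longrightarrow> u v = s v) \<and> u \<in> A}}
      = {s. \<exists>w. (\<forall>v. v \<notin> \<pi> ` X \<longrightarrow> w v = s v) \<and> w \<in> {w. w \<circ> \<pi> \<in> A}}"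
  proof (intro set_eqI iffI; clarsimp)
    fix t u assume u: "\<forall>v. v \<notin> X \<longrightarrow> u v = t (\<pi> v)" "u \<in> A"
    have "u \<circ> inv \<pi> \<circ> \<pi> = u"
      using bij_is_inj[OF assms(2)] by auto
    moreover have "(u \<circ> inv \<pi>) v = t v" if "v \<notin> \<pi> ` X" for v
      using that u(1) bij_inv_eq_iff[OF assms(2)] by (metis comp_apply image_eqI)
    ultimately show "\<exists>w. (\<forall>v. v \<notin> \<pi> ` X \<longrightarrow> w v = t v) \<and> w \<circ> \<pi> \<in> A"
      using u(2) by metis
  next
    fix t w assume w: "\<forall>v. v \<notin> \<pi> ` X \<longrightarrow> w v = t v" "w \<circ> \<pi> \<in> A"
    then show "\<exists>u. (\<forall>v. v \<notin> X \<longrightarrow> u v = t (\<pi> v)) \<and> u \<in> A"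
      using bij_is_inj[OF assms(2)] by (intro exI[of _ "w \<circ> \<pi>"]) (auto simp: inj_image_mem_iff)
  qed
  then show ?case using lformula.ex[OF ex.IH] by (simp only:)
next
  case (quant ks Q xss As)
  have inj: "inj \<pi>" using bij_is_inj[OF assms(2)] .
  show ?case unfolding mem_Collect_eq
    by (rule lformula_quant_pullback[OF quant(1), where f="\<lambda>t. t \<circ> \<pi>"
          and xss="map (map \<pi>) xss" and Bs="\<lambda>i. {u. u \<circ> \<pi> \<in> As ! i}"])
      (use quant(2,4) in \<open>auto simp: quant.IH upd_comp[OF inj] distinct_map inj_on_subset[OF inj]\<close>)
qed

lemma lformula_instance:
  fixes x y :: 'v
  assumes "lformula q (A :: ('v \<Rightarrow> 'a) set)"
  shows "lformula q {t. s(y := t x) \<in> A}"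
proof -
  define \<pi> where "\<pi> = id(x := y, y := x)"
  have "bij \<pi>" by (rule o_bij[of \<pi>]) (auto simp: \<pi>_def)
  then have "lformula q {t. t \<circ> \<pi> \<in> {t. override_on s t {y} \<in> A}}"
    by (intro lformula_rename lformula_override_on assms)
  moreover have "override_on s (t \<circ> \<pi>) {y} = s(y := t x)" for t
    by (auto simp: \<pi>_def override_on_def)
  ultimately show ?thesis by simp
qed

lemma equivp_lsim: "equivp (lsim V q)"
  by (intro equivpI reflpI sympI transpI) (auto simp: lsim_def)

lemma lsim_iff_preserved:
  "lsim (V :: 'v itself) q a b \<longleftrightarrow>
     (\<forall>(A :: ('v \<Rightarrow> 'a) set) s x. lformula q A \<longrightarrow> s(x := a) \<in> A \<longrightarrow> s(x := b) \<in> A)"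
  unfolding lsim_def by (metis ComplD ComplI lformula.neg)

lemma lformula_lsim_class:
  fixes V :: "'v itself" and x :: 'v
  shows "lformula q {t :: 'v \<Rightarrow> 'a. lsim V q a (t x)}"
proof -
  let ?F = "{{t. s(y := t x) \<in> A} | (A :: ('v \<Rightarrow> 'a) set) s y. lformula q A \<and> s(y := a) \<in> A}"
  have "{t :: 'v \<Rightarrow> 'a. lsim V q a (t x)} = \<Inter> ?F"
  proof (intro set_eqI iffI)
    fix t :: "'v \<Rightarrow> 'a"
    assume "t \<in> {t. lsim V q a (t x)}"
    then show "t \<in> \<Inter> ?F"
      unfolding lsim_iff_preserved by blast
  next
    fix t :: "'v \<Rightarrow> 'a"
    assume "t \<in> \<Inter> ?F"
    then show "t \<in> {t. lsim V q a (t x)}"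
      unfolding lsim_iff_preserved by blast
  qed
  moreover have "lformula q (\<Inter> ?F)"
    by (rule lformula.conj) (auto intro: lformula_instance)
  ultimately show ?thesis by simp
qed

lemma upd_Cons: "upd s (x # xs) (a # as) = (upd s xs as)(x := a)"
  by (rule ext) (simp add: upd_def)

lemma upd_fun_upd:
  "x \<notin> set xs \<Longrightarrow> length as = length xs \<Longrightarrow> upd (s(x := b)) xs as = (upd s xs as)(x := b)"
  by (rule ext) (auto simp: upd_def split: option.split dest: map_of_SomeD set_zip_leftD)

lemma upd_nth:
  "distinct xs \<Longrightarrow> length as = length xs \<Longrightarrow> i < length xs \<Longrightarrow> upd s xs as (xs ! i) = as ! i"
  by (simp add: upd_def map_of_zip_nth)

lemma lformula_upd_lsim:
  fixes A :: "('v \<Rightarrow> 'a) set" and V :: "'v itself"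
  assumes "lformula q A" and "distinct xs" and "length as = length xs"
    and "list_all2 (lsim V q) as bs"
  shows "upd s xs as \<in> A \<longleftrightarrow> upd s xs bs \<in> A"
  using assms(2-4)
proof (induction xs arbitrary: as bs s)
  case (Cons x xs)
  obtain a as' b bs' where as: "as = a # as'" and bs: "bs = b # bs'"
    and ab: "lsim V q a b" and rest: "list_all2 (lsim V q) as' bs'"
    using Cons.prems(2,3) by (cases as; cases bs) auto
  have x: "x \<notin> set xs" and len: "length as' = length xs" "length bs' = length xs"
    using Cons.prems(1,2) rest by (auto simp: as dest: list_all2_lengthD)
  have "upd s (x # xs) as \<in> A \<longleftrightarrow> (upd s xs as')(x := a) \<in> A" by (simp add: as upd_Cons)
  also have "\<dots> \<longleftrightarrow> (upd s xs as')(x := b) \<in> A"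
    using ab assms(1) unfolding lsim_def by blast
  also have "\<dots> \<longleftrightarrow> upd (s(x := b)) xs as' \<in> A" using x len by (simp add: upd_fun_upd)
  also have "\<dots> \<longleftrightarrow> upd (s(x := b)) xs bs' \<in> A"
    using Cons.prems(1) len rest by (intro Cons.IH) auto
  also have "\<dots> \<longleftrightarrow> upd s (x # xs) bs \<in> A" using x len by (simp add: upd_fun_upd bs upd_Cons)
  finally show ?case .
qed simp

lemma invariant_if_ldefinable:
  "ldefinable V q k R \<Longrightarrow> invariant (lsim V q) k R"
  unfolding ldefinable_def invariant_def
  by (auto dest: list_all2_lengthD lformula_upd_lsim[where V=V])

lemma ex_distinct_list:
  assumes "infinite (UNIV :: 'a set)"
  obtains xs :: "'a list" where "distinct xs" and "length xs = k"
proof -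
  obtain S :: "'a set" where "finite S" and "card S = k"
    using infinite_arbitrarily_large[OF assms] by blast
  then show ?thesis by (metis distinct_card finite_distinct_list that)
qed

lemma ldefinable_if_invariant:
  fixes V :: "'v itself"
  assumes "infinite (UNIV :: 'v set)" and "\<forall>t\<in>R. length t = k"
    and "invariant (lsim V q) k R"
  shows "ldefinable V q k R"
proof -
  obtain xs :: "'v list" where xs: "distinct xs" "length xs = k"
    using ex_distinct_list[OF assms(1)] .
  define D :: "('v \<Rightarrow> 'a) set" where
    "D = (\<Union>as\<in>R. \<Inter>i<k. {t. lsim V q (as ! i) (t (xs ! i))})"
  have "lformula q D"
    unfolding D_def
  proof (intro lformula_Union, clarify)
    fix as
    show "lformula q (\<Inter>i<k. {t. lsim V q (as ! i) (t (xs ! i))})"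
      by (rule lformula.conj) (auto simp: lformula_lsim_class)
  qed
  moreover have "R = {bs. length bs = k \<and> upd undefined xs bs \<in> D}"
  proof -
    have R_iff: "bs \<in> R \<longleftrightarrow> length bs = k \<and> (\<exists>as\<in>R. list_all2 (lsim V q) as bs)" for bs
    proof
      assume "bs \<in> R"
      show "length bs = k \<and> (\<exists>as\<in>R. list_all2 (lsim V q) as bs)"
      proof (intro conjI)
        show "length bs = k" using assms(2) \<open>bs \<in> R\<close> by blast
        have "list_all2 (lsim V q) bs bs" by (rule list_all2_refl) (simp add: lsim_def)
        with \<open>bs \<in> R\<close> show "\<exists>as\<in>R. list_all2 (lsim V q) as bs" by blast
      qed
    next
      assume "length bs = k \<and> (\<exists>as\<in>R. list_all2 (lsim V q) as bs)"
      then obtain as where "as \<in> R" "list_all2 (lsim V q) as bs" by blast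
      moreover have "length as = k" using assms(2) \<open>as \<in> R\<close> by blast
      ultimately show "bs \<in> R" using assms(3) unfolding invariant_def by blast
    qed
    have D_iff: "upd undefined xs bs \<in> D \<longleftrightarrow> (\<exists>as\<in>R. list_all2 (lsim V q) as bs)"
      if "length bs = k" for bs
    proof -
      have "list_all2 (lsim V q) as bs \<longleftrightarrow> (\<forall>i<k. lsim V q (as ! i) (upd undefined xs bs (xs ! i)))"
        if "as \<in> R" for as
        using that \<open>length bs = k\<close> assms(2) xs by (auto simp: list_all2_conv_all_nth upd_nth)
      then show ?thesis unfolding D_def by blast
    qed
    show ?thesis using R_iff D_iff by blast
  qed
  ultimately show ?thesis
    unfolding ldefinable_def using xs by blast
qed

lemma ldefinable_iff_invariant:
  fixes V :: "'v itself"
  assumes "infinite (UNIV :: 'v set)" and "\<forall>t\<in>R. length t = k"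
  shows "ldefinable V q k R \<longleftrightarrow> invariant (lsim V q) k R"
  using invariant_if_ldefinable ldefinable_if_invariant[OF assms] by blast

lemma restrict_def_eq_invariant:
  fixes V :: "'v itself"
  assumes "infinite (UNIV :: 'v set)" and "is_quant ks Q"
  shows "restrict_def V q ks Q = {Rs \<in> Q. \<forall>i<length ks. invariant (lsim V q) (ks ! i) (Rs ! i)}"
proof -
  have "ldefinable V q (ks ! i) (Rs ! i) \<longleftrightarrow> invariant (lsim V q) (ks ! i) (Rs ! i)"
    if "Rs \<in> Q" and "i < length ks" for Rs i
    using assms(2) that unfolding is_quant_def by (intro ldefinable_iff_invariant[OF assms(1)]) blast
  then show ?thesis unfolding restrict_def_def by blast
qed

lemma cls_eq_iff:
  assumes "equivp sim"
  shows "cls sim a = cls sim b \<longleftrightarrow> sim a b"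
proof
  assume "cls sim a = cls sim b"
  moreover have "b \<in> cls sim b" using equivp_reflp[OF assms] by (simp add: cls_def)
  ultimately show "sim a b" unfolding cls_def by blast
next
  assume "sim a b"
  then show "cls sim a = cls sim b"
    using equivp_symp[OF assms] equivp_transp[OF assms] unfolding cls_def by blast
qed

lemma map_cls_eq_iff:
  assumes "equivp sim"
  shows "map (cls sim) as = map (cls sim) bs \<longleftrightarrow> list_all2 sim as bs"
proof -
  have "map (cls sim) as = map (cls sim) bs \<longleftrightarrow> list_all2 (\<lambda>a b. cls sim a = cls sim b) as bs"
    by (simp add: list.rel_eq[symmetric] list.rel_map)
  also have "\<dots> \<longleftrightarrow> list_all2 sim as bs" by (simp add: cls_eq_iff[OF assms])
  finally show ?thesis .
qed

lemma invariant_cup_rel: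
  assumes "equivp sim"
  shows "invariant sim k (cup_rel sim R')"
proof (unfold invariant_def, intro allI impI)
  fix as bs assume "list_all2 sim as bs"
  then have "map (cls sim) as = map (cls sim) bs" using map_cls_eq_iff[OF assms] by blast
  then show "as \<in> cup_rel sim R' \<longleftrightarrow> bs \<in> cup_rel sim R'" by (simp add: cup_rel_def)
qed

lemma cup_rel_image_cls:
  assumes "equivp sim" and "invariant sim k R" and "\<forall>t\<in>R. length t = k"
  shows "cup_rel sim (map (cls sim) ` R) = R"
proof (intro set_eqI iffI)
  fix as assume "as \<in> cup_rel sim (map (cls sim) ` R)"
  then obtain r where "r \<in> R" and "map (cls sim) r = map (cls sim) as"
    by (auto simp: cup_rel_def)
  moreover from this have "list_all2 sim r as" and "length r = k"
    using map_cls_eq_iff[OF assms(1)] assms(3) by blast+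
  ultimately show "as \<in> R" using assms(2) unfolding invariant_def by blast
qed (auto simp: cup_rel_def)

lemma cup_quant_quot_quant:
  assumes "equivp sim" and "is_quant ks Q"
  shows "cup_quant sim (quot_quant sim ks Q)
       = {Rs \<in> Q. \<forall>i<length ks. invariant sim (ks ! i) (Rs ! i)}"
proof (intro set_eqI iffI)
  fix Rs assume "Rs \<in> cup_quant sim (quot_quant sim ks Q)"
  then obtain R's where "R's \<in> quot_quant sim ks Q" and Rs: "Rs = map (cup_rel sim) R's"
    by (auto simp: cup_quant_def)
  then show "Rs \<in> {Rs \<in> Q. \<forall>i<length ks. invariant sim (ks ! i) (Rs ! i)}"
    by (auto simp: quot_quant_def invariant_cup_rel[OF assms(1)])
next
  fix Rs assume "Rs \<in> {Rs \<in> Q. \<forall>i<length ks. invariant sim (ks ! i) (Rs ! i)}"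
  then have "Rs \<in> Q" and inv: "\<forall>i<length ks. invariant sim (ks ! i) (Rs ! i)" by auto
  then have len: "length Rs = length ks" and lens: "\<forall>i<length ks. \<forall>t\<in>Rs ! i. length t = ks ! i"
    using assms(2) by (auto simp: is_quant_def)
  define R's where "R's = map (\<lambda>R. map (cls sim) ` R) Rs"
  have "map (cup_rel sim) R's = Rs"
  proof (rule nth_equalityI)
    fix i assume "i < length (map (cup_rel sim) R's)"
    then have "i < length ks" using len by (simp add: R's_def)
    then show "map (cup_rel sim) R's ! i = Rs ! i"
      using len inv lens cup_rel_image_cls[OF assms(1), of "ks ! i" "Rs ! i"] by (simp add: R's_def)
  qed (simp add: R's_def)
  moreover have "R's \<in> quot_quant sim ks Q"
    using \<open>Rs \<in> Q\<close> \<open>map (cup_rel sim) R's = Rs\<close> len lens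
    by (auto simp: quot_quant_def R's_def quot_def)
  ultimately show "Rs \<in> cup_quant sim (quot_quant sim ks Q)"
    unfolding cup_quant_def by (metis image_eqI)
qed

theorem proposition12:
  fixes q :: "'a oper set" and V :: "'v itself"
  assumes "infinite (UNIV :: 'v set)"
  shows "(\<forall>k (R :: 'a list set). (\<forall>t\<in>R. length t = k) \<longrightarrow>
            (ldefinable V q k R \<longleftrightarrow> invariant (lsim V q) k R))
       \<and> (\<forall>ks (Q :: 'a list set list set). is_quant ks Q \<longrightarrow>
            restrict_def V q ks Q = cup_quant (lsim V q) (quot_quant (lsim V q) ks Q))"
proof (intro conjI allI impI)
  fix k and R :: "'a list set"
  assume "\<forall>t\<in>R. length t = k"
  then show "ldefinable V q k R \<longleftrightarrow> invariant (lsim V q) k R"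
    by (rule ldefinable_iff_invariant[OF assms])
next
  fix ks and Q :: "'a list set list set"
  assume "is_quant ks Q"
  then show "restrict_def V q ks Q = cup_quant (lsim V q) (quot_quant (lsim V q) ks Q)"
    by (simp add: restrict_def_eq_invariant[OF assms] cup_quant_quot_quant[OF equivp_lsim])
qed

end
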